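(* Let $(L,\wedge,\vee,0,1)$ be a bounded lattice. Then its additive Nakano mosaic $(L,\boxplus,0)$, where $x\boxplus y:=\{z\in L\mid x\vee y=x\vee z=z\vee y\}$, is an L-mosaic.
   Context: For a multioperation $\boxplus:A\times A\to\wp(A)$ and subsets $X,Y$, $X\boxplus Y:=\bigcup_{x\in X,y\in Y}x\boxplus y$. A commutative mosaic $(A,\boxplus,e)$: $x\boxplus y=y\boxplus x$, $e\boxplus x=\{x\}$ for all $x$, and for some endofunction $\rho$, $z\in x\boxplus y$ implies $x\in z\boxplus\rho(y)$ and $y\in\rho(x)\boxplus z$. An L-mosaic is a commutative mosaic $(A,\boxplus,0)$ such that: (Lms1) $0,x\in x\boxplus x$ for all $x$; (Lms2) $(x\boxplus x)\boxplus(x\boxplus x)=x\boxplus x$ for all $x$; (Lms3) $(x\boxplus(x\boxplus y))\cap((x\boxplus y)\boxplus y)\subseteq x\boxplus y$ for all $x,y$; (Lms4) for all $x,y$ there is a unique $z\in x\boxplus y$ with $x,y\in z\boxplus z$. *)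

theory Defs
  imports Main
begin

definition set_mop :: "('a \<Rightarrow> 'a \<Rightarrow> 'a set) \<Rightarrow> 'a set \<Rightarrow> 'a set \<Rightarrow> 'a set" where
  "set_mop m X Y = (\<Union>x\<in>X. \<Union>y\<in>Y. m x y)"

definition comm_mosaic :: "('a \<Rightarrow> 'a \<Rightarrow> 'a set) \<Rightarrow> 'a \<Rightarrow> bool" where
  "comm_mosaic m e \<longleftrightarrow>
     (\<forall>x y. m x y = m y x) \<and>
     (\<forall>x. m e x = {x}) \<and>
     (\<exists>\<rho> :: 'a \<Rightarrow> 'a. \<forall>x y z. z \<in> m x y \<longrightarrow> x \<in> m z (\<rho> y) \<and> y \<in> m (\<rho> x) z)"

definition L_mosaic :: "('a \<Rightarrow> 'a \<Rightarrow> 'a set) \<Rightarrow> 'a \<Rightarrow> bool" where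
  "L_mosaic m e \<longleftrightarrow>
     comm_mosaic m e \<and>
     (\<forall>x. e \<in> m x x \<and> x \<in> m x x) \<and>
     (\<forall>x. set_mop m (m x x) (m x x) = m x x) \<and>
     (\<forall>x y. set_mop m {x} (m x y) \<inter> set_mop m (m x y) {y} \<subseteq> m x y) \<and>
     (\<forall>x y. \<exists>!z. z \<in> m x y \<and> x \<in> m z z \<and> y \<in> m z z)"

definition nakano_add :: "'a::bounded_lattice \<Rightarrow> 'a \<Rightarrow> 'a set" where
  "nakano_add x y = {z. sup x y = sup x z \<and> sup x z = sup z y}"

end

theory Submission
  imports Defs
begin

(* Every element of x \<boxplus> y lies below x \<squnion> y, and x \<boxplus> x is the principal down-set of x.
   Hence x \<boxplus> x is closed under \<boxplus>, the element demanded by (Lms4) is forced to be x \<squnion> y,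
   and (Lms3) holds because membership in x \<boxplus> y only asks that x \<squnion> w and w \<squnion> y both
   equal x \<squnion> y.  The identity serves as the reversal map \<rho>. *)

lemma nakano_add_iff:
  "z \<in> nakano_add x y \<longleftrightarrow> sup x y = sup x z \<and> sup x z = sup z y"
  by (simp add: nakano_add_def)

lemma nakano_add_commute: "nakano_add x y = nakano_add y x"
  by (auto simp: nakano_add_def sup_commute)

lemma nakano_add_bot_left: "nakano_add bot x = {x}"
  by (auto simp: nakano_add_def sup_commute)

lemma nakano_add_self: "nakano_add x x = {..x}"
  by (auto simp: nakano_add_def sup.absorb_iff1 sup_commute)

lemma nakano_add_le_sup: "z \<in> nakano_add x y \<Longrightarrow> z \<le> sup x y"
  by (simp add: nakano_add_def)

lemma nakano_add_reversible:
  "z \<in> nakano_add x y \<Longrightarrow> x \<in> nakano_add z y \<and> y \<in> nakano_add x z"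
  by (auto simp: nakano_add_def sup_commute)

lemma comm_mosaic_nakano_add: "comm_mosaic nakano_add bot"
  unfolding comm_mosaic_def
  using nakano_add_commute nakano_add_bot_left nakano_add_reversible
  by (metis id_apply)

lemma set_mop_nakano_add_self:
  "set_mop nakano_add (nakano_add x x) (nakano_add x x) = nakano_add x x"
proof
  show "set_mop nakano_add (nakano_add x x) (nakano_add x x) \<subseteq> nakano_add x x"
  proof
    fix w assume "w \<in> set_mop nakano_add (nakano_add x x) (nakano_add x x)"
    then obtain a b where "a \<le> x" "b \<le> x" "w \<in> nakano_add a b"
      unfolding set_mop_def nakano_add_self by blast
    then have "w \<le> sup a b" "sup a b \<le> x"
      by (simp_all add: nakano_add_le_sup)
    then show "w \<in> nakano_add x x"
      by (simp add: nakano_add_self order_trans)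
  qed
  show "nakano_add x x \<subseteq> set_mop nakano_add (nakano_add x x) (nakano_add x x)"
  proof
    fix w assume "w \<in> nakano_add x x"
    moreover have "bot \<in> nakano_add x x"
      by (simp add: nakano_add_self)
    moreover have "w \<in> nakano_add w bot"
      by (simp add: nakano_add_commute[of w] nakano_add_bot_left)
    ultimately show "w \<in> set_mop nakano_add (nakano_add x x) (nakano_add x x)"
      unfolding set_mop_def by blast
  qed
qed

lemma set_mop_nakano_add_Int_subset:
  "set_mop nakano_add {x} (nakano_add x y) \<inter> set_mop nakano_add (nakano_add x y) {y}
     \<subseteq> nakano_add x y"
proof
  fix w
  assume "w \<in> set_mop nakano_add {x} (nakano_add x y) \<inter> set_mop nakano_add (nakano_add x y) {y}"
  then obtain u v where "u \<in> nakano_add x y" "w \<in> nakano_add x u"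
    and "v \<in> nakano_add x y" "w \<in> nakano_add v y"
    by (auto simp: set_mop_def)
  then have "sup x w = sup x y" "sup w y = sup x y"
    by (simp_all add: nakano_add_iff)
  then show "w \<in> nakano_add x y"
    by (simp add: nakano_add_iff)
qed

lemma nakano_add_ex1_upper:
  "\<exists>!z. z \<in> nakano_add x y \<and> x \<in> nakano_add z z \<and> y \<in> nakano_add z z"
proof (rule ex1I[of _ "sup x y"])
  show "sup x y \<in> nakano_add x y \<and> x \<in> nakano_add (sup x y) (sup x y)
        \<and> y \<in> nakano_add (sup x y) (sup x y)"
    by (simp add: nakano_add_iff nakano_add_self sup_assoc sup_commute sup_left_commute)
next
  fix z assume "z \<in> nakano_add x y \<and> x \<in> nakano_add z z \<and> y \<in> nakano_add z z"
  then have "z \<le> sup x y" "x \<le> z" "y \<le> z"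
    by (auto simp: nakano_add_self nakano_add_le_sup)
  then show "z = sup x y"
    by (simp add: antisym)
qed

theorem mainTheorem8:
  shows "L_mosaic (nakano_add :: 'a::bounded_lattice \<Rightarrow> 'a \<Rightarrow> 'a set) bot"
proof -
  have "bot \<in> nakano_add x x \<and> x \<in> nakano_add x x" for x :: 'a
    by (simp add: nakano_add_self)
  then show ?thesis
    unfolding L_mosaic_def
    using comm_mosaic_nakano_add set_mop_nakano_add_self set_mop_nakano_add_Int_subset
      nakano_add_ex1_upper
    by blast
qed

end
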